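(* Let $S$ be a semigroup or monoid. Then any two loop problems of $S$, taken with respect to finite choices of generators (semigroup choices, or, when $S$ is a monoid, semigroup or monoid choices), are rationally equivalent.
   Context: Maps are written on the right. $X^*$, $X^+$: free monoid and free semigroup on $X$. Let $\overline{X} = \{\overline{x} : x \in X\}$ be new symbols, $\hat{X} = X \cup \overline{X}$. For a monoid $M$ and surjective monoid morphism $\sigma : X^* \to M$, the loop automaton has vertex set $M$, for each $a \in M$, $x \in X$ an edge $a \to a(x\sigma)$ labelled $x$ and an edge $a(x\sigma) \to a$ labelled $\overline{x}$; the loop problem $L_\sigma(M) \subseteq \hat{X}^*$ is the set of labels of paths from the identity to the identity. For a semigroup $S$ (possibly a monoid) and surjective morphism $\sigma : X^+ \to S$, $L_\sigma(S)$ is the loop problem of $S^1$ ($S$ with a new identity adjoined, even if one exists) with respect to the unique extension $X^* \to S^1$. A rational transduction from a finite alphabet $A$ to a finite alphabet $B$ is a relation $\rho \subseteq A^* \times B^*$ accepted by a finite transducer: a finite directed graph with edges labelled in $A^* \times B^*$, an initial vertex and terminal vertices, accepting the componentwise-concatenated labels of initial-to-terminal paths. The image of $L \subseteq A^*$ is $L\rho = \{v : (u,v) \in \rho \text{ for some } u \in L\}$. Two languages are rationally equivalent if each is the image of the other under some rational transduction. *)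

theory Defs
  imports Main
begin

definition is_semigroup :: "'s set \<Rightarrow> ('s \<Rightarrow> 's \<Rightarrow> 's) \<Rightarrow> bool" where
  "is_semigroup S mult \<longleftrightarrow>
     (\<forall>a\<in>S. \<forall>b\<in>S. mult a b \<in> S) \<and>
     (\<forall>a\<in>S. \<forall>b\<in>S. \<forall>c\<in>S. mult (mult a b) c = mult a (mult b c))"

definition is_monoid :: "'s set \<Rightarrow> ('s \<Rightarrow> 's \<Rightarrow> 's) \<Rightarrow> 's \<Rightarrow> bool" where
  "is_monoid M mult e \<longleftrightarrow> is_semigroup M mult \<and> e \<in> M \<and>
     (\<forall>a\<in>M. mult e a = a \<and> mult a e = a)"

definition mon_eval :: "('s \<Rightarrow> 's \<Rightarrow> 's) \<Rightarrow> 's \<Rightarrow> ('x \<Rightarrow> 's) \<Rightarrow> 'x list \<Rightarrow> 's" where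
  "mon_eval mult e g xs = foldl mult e (map g xs)"

definition sg_eval :: "('s \<Rightarrow> 's \<Rightarrow> 's) \<Rightarrow> ('x \<Rightarrow> 's) \<Rightarrow> 'x list \<Rightarrow> 's" where
  "sg_eval mult g xs = foldl mult (g (hd xs)) (map g (tl xs))"

definition monoid_choice :: "'s set \<Rightarrow> ('s \<Rightarrow> 's \<Rightarrow> 's) \<Rightarrow> 's \<Rightarrow> 'x set \<Rightarrow> ('x \<Rightarrow> 's) \<Rightarrow> bool" where
  "monoid_choice M mult e X g \<longleftrightarrow> finite X \<and> g ` X \<subseteq> M \<and>
     (\<forall>m\<in>M. \<exists>xs\<in>lists X. mon_eval mult e g xs = m)"

definition semigroup_choice :: "'s set \<Rightarrow> ('s \<Rightarrow> 's \<Rightarrow> 's) \<Rightarrow> 'x set \<Rightarrow> ('x \<Rightarrow> 's) \<Rightarrow> bool" where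
  "semigroup_choice S mult X g \<longleftrightarrow> finite X \<and> g ` X \<subseteq> S \<and>
     (\<forall>s\<in>S. \<exists>xs\<in>lists X. xs \<noteq> [] \<and> sg_eval mult g xs = s)"

text \<open>The alphabet \<open>X\<^sup>^ = X \<union> X\<^sup>-\<close>: \<open>Inl x\<close> stands for \<open>x\<close>, \<open>Inr x\<close> for \<open>x\<^sup>-\<close>.\<close>
definition hat :: "'x set \<Rightarrow> ('x + 'x) set" where
  "hat X = Inl ` X \<union> Inr ` X"

inductive loop_path :: "'s set \<Rightarrow> ('s \<Rightarrow> 's \<Rightarrow> 's) \<Rightarrow> 'x set \<Rightarrow> ('x \<Rightarrow> 's)
    \<Rightarrow> 's \<Rightarrow> ('x + 'x) list \<Rightarrow> 's \<Rightarrow> bool"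
  for M mult X g where
  nil: "a \<in> M \<Longrightarrow> loop_path M mult X g a [] a"
| fwd: "\<lbrakk>a \<in> M; x \<in> X; loop_path M mult X g (mult a (g x)) w b\<rbrakk>
        \<Longrightarrow> loop_path M mult X g a (Inl x # w) b"
| bwd: "\<lbrakk>a \<in> M; c \<in> M; x \<in> X; mult c (g x) = a; loop_path M mult X g c w b\<rbrakk>
        \<Longrightarrow> loop_path M mult X g a (Inr x # w) b"

definition loop_problem_mon :: "'s set \<Rightarrow> ('s \<Rightarrow> 's \<Rightarrow> 's) \<Rightarrow> 's \<Rightarrow> 'x set \<Rightarrow> ('x \<Rightarrow> 's)
    \<Rightarrow> ('x + 'x) list set" where
  "loop_problem_mon M mult e X g = {w. loop_path M mult X g e w e}"

text \<open>\<open>S\<^sup>1\<close>: \<open>S\<close> with a new identity \<open>None\<close> adjoined.\<close>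
definition adjoin_one :: "'s set \<Rightarrow> 's option set" where
  "adjoin_one S = insert None (Some ` S)"

fun mult_one :: "('s \<Rightarrow> 's \<Rightarrow> 's) \<Rightarrow> 's option \<Rightarrow> 's option \<Rightarrow> 's option" where
  "mult_one mult None b = b"
| "mult_one mult a None = a"
| "mult_one mult (Some a) (Some b) = Some (mult a b)"

definition loop_problem_sg :: "'s set \<Rightarrow> ('s \<Rightarrow> 's \<Rightarrow> 's) \<Rightarrow> 'x set \<Rightarrow> ('x \<Rightarrow> 's)
    \<Rightarrow> ('x + 'x) list set" where
  "loop_problem_sg S mult X g =
     loop_problem_mon (adjoin_one S) (mult_one mult) None X (\<lambda>x. Some (g x))"

definition is_loop_problem :: "'s set \<Rightarrow> ('s \<Rightarrow> 's \<Rightarrow> 's) \<Rightarrow> 'x set \<Rightarrow> ('x + 'x) list set \<Rightarrow> bool" where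
  "is_loop_problem S mult X L \<longleftrightarrow>
     (\<exists>g. semigroup_choice S mult X g \<and> L = loop_problem_sg S mult X g) \<or>
     (\<exists>e g. is_monoid S mult e \<and> monoid_choice S mult e X g \<and> L = loop_problem_mon S mult e X g)"

inductive trans_run :: "(nat \<times> 'a list \<times> 'b list \<times> nat) set \<Rightarrow> nat \<Rightarrow> 'a list \<Rightarrow> 'b list \<Rightarrow> nat \<Rightarrow> bool"
  for E where
  nil: "trans_run E q [] [] q"
| step: "\<lbrakk>(p, u, v, q) \<in> E; trans_run E q u' v' r\<rbrakk> \<Longrightarrow> trans_run E p (u @ u') (v @ v') r"

definition rational_transduction :: "'a set \<Rightarrow> 'b set \<Rightarrow> ('a list \<times> 'b list) set \<Rightarrow> bool" where
  "rational_transduction A B \<rho> \<longleftrightarrow>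
     (\<exists>Q E q0 F. finite Q \<and> finite E \<and> q0 \<in> Q \<and> F \<subseteq> Q \<and>
        E \<subseteq> Q \<times> lists A \<times> lists B \<times> Q \<and>
        \<rho> = {(u, v). \<exists>f\<in>F. trans_run E q0 u v f})"

definition trans_image :: "'a list set \<Rightarrow> ('a list \<times> 'b list) set \<Rightarrow> 'b list set" where
  "trans_image L \<rho> = {v. \<exists>u\<in>L. (u, v) \<in> \<rho>}"

definition rationally_equivalent :: "'a set \<Rightarrow> 'b set \<Rightarrow> 'a list set \<Rightarrow> 'b list set \<Rightarrow> bool" where
  "rationally_equivalent A B L1 L2 \<longleftrightarrow>
     (\<exists>\<rho>. rational_transduction A B \<rho> \<and> L2 = trans_image L1 \<rho>) \<and>
     (\<exists>\<rho>. rational_transduction B A \<rho> \<and> L1 = trans_image L2 \<rho>)"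

end

theory Submission
  imports Defs
begin

text \<open>For another choice \<open>Y\<close>, write
  each generator \<open>y\<close> as a word \<open>h y\<close> over \<open>X\<close> with the same value; the morphism sending \<open>y\<close> to
  \<open>h y\<close> and \<open>y\<^sup>-\<close> to the reversed word of inverse letters simulates paths of the loop automaton
  over \<open>Y\<close> by paths over \<open>X\<close>, so one loop problem is the inverse image of the other.
  Only the adjoined identity of \<open>S\<^sup>1\<close> causes trouble when the two choices are of different
  kinds. The loops of \<open>S\<^sup>1\<close> at the adjoined identity are the loops of the monoid \<open>S\<close> at its
  identity that begin with a positive and end with a negative letter, a regular condition.
  In the other direction, conjugating every letter image by a nonempty word \<open>p\<close> of value
  \<open>1\<close> forces a path to leave the adjoined identity at once. Inverse morphisms restricted to
  regular languages are rational transductions.\<close>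

section \<open>Regular restrictions of inverse morphisms\<close>

lemma trans_run_dfa_iff:
  assumes E: "E = {(q, f b, [b], \<delta> q b) | q b. q \<in> Q \<and> b \<in> B}"
    and closed: "\<forall>q\<in>Q. \<forall>b\<in>B. \<delta> q b \<in> Q" and "q \<in> Q"
  shows "trans_run E q u v r \<longleftrightarrow> v \<in> lists B \<and> r = foldl \<delta> q v \<and> u = concat (map f v)"
proof
  show "trans_run E q u v r \<Longrightarrow> v \<in> lists B \<and> r = foldl \<delta> q v \<and> u = concat (map f v)"
    by (induction rule: trans_run.induct) (auto simp: E)
  show "v \<in> lists B \<and> r = foldl \<delta> q v \<and> u = concat (map f v) \<Longrightarrow> trans_run E q u v r"
    using \<open>q \<in> Q\<close>
  proof (induction v arbitrary: q u)
    case Nil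
    then show ?case by (simp add: trans_run.nil)
  next
    case (Cons b v)
    then have "(q, f b, [b], \<delta> q b) \<in> E" and "trans_run E (\<delta> q b) (concat (map f v)) v r"
      using closed by (auto simp: E)
    then show ?case
      using Cons.prems trans_run.step by fastforce
  qed
qed

lemma dfa_preimage_rational_image:
  fixes \<delta> :: "nat \<Rightarrow> 'b \<Rightarrow> nat"
  assumes "finite B" and "f ` B \<subseteq> lists A"
    and "finite Q" and "q0 \<in> Q" and "F \<subseteq> Q" and closed: "\<forall>q\<in>Q. \<forall>b\<in>B. \<delta> q b \<in> Q"
  shows "\<exists>\<rho>. rational_transduction A B \<rho> \<and>
    {v \<in> lists B. foldl \<delta> q0 v \<in> F \<and> concat (map f v) \<in> L} = trans_image L \<rho>"
proof (intro exI conjI)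
  define E where "E = {(q, f b, [b], \<delta> q b) | q b. q \<in> Q \<and> b \<in> B}"
  define \<rho> where "\<rho> = {(u, v). \<exists>r\<in>F. trans_run E q0 u v r}"
  have "E = (\<lambda>(q, b). (q, f b, [b], \<delta> q b)) ` (Q \<times> B)"
    by (auto simp: E_def)
  then have "finite E"
    using assms(1,3) by simp
  moreover have "E \<subseteq> Q \<times> lists A \<times> lists B \<times> Q"
    using assms(2) closed by (auto simp: E_def)
  ultimately show "rational_transduction A B \<rho>"
    unfolding rational_transduction_def \<rho>_def using assms(3-5) by blast
  show "{v \<in> lists B. foldl \<delta> q0 v \<in> F \<and> concat (map f v) \<in> L} = trans_image L \<rho>"
    using trans_run_dfa_iff[OF E_def closed \<open>q0 \<in> Q\<close>] by (auto simp: trans_image_def \<rho>_def)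
qed

lemma preimage_rational_image:
  fixes f :: "'b \<Rightarrow> 'a list"
  assumes "finite B" and "f ` B \<subseteq> lists A"
  shows "\<exists>\<rho>. rational_transduction A B \<rho> \<and> {v \<in> lists B. concat (map f v) \<in> L} = trans_image L \<rho>"
proof -
  have stays_0: "foldl (\<lambda>_ _. 0) 0 v = (0::nat)" for v :: "'b list"
    by (induction v) auto
  show ?thesis
    using dfa_preimage_rational_image[OF assms, of "{0}" 0 "{0}" "\<lambda>_ _. 0" L]
    by (simp add: stays_0)
qed

definition bracketed :: "('a + 'b) list \<Rightarrow> bool" where
  "bracketed w \<longleftrightarrow> w = [] \<or> isl (hd w) \<and> \<not> isl (last w)"

text \<open>A deterministic automaton for \<open>bracketed\<close>: state 0 is initial, 3 is a sink reached when the
  word starts with a negative letter, and otherwise 1 and 2 record whether the last letter read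
  was positive or negative.\<close>
definition bracket_step :: "nat \<Rightarrow> 'a + 'b \<Rightarrow> nat" where
  "bracket_step q c = (if q = 0 \<and> \<not> isl c \<or> q = 3 then 3 else if isl c then 1 else 2)"

lemma foldl_bracket_step_sink: "foldl bracket_step 3 w = 3"
  by (induction w) (auto simp: bracket_step_def)

lemma foldl_bracket_step_last:
  "q \<in> {1, 2} \<Longrightarrow> foldl bracket_step q w = (if w = [] then q else if isl (last w) then 1 else 2)"
  by (induction w rule: rev_induct) (auto simp: bracket_step_def)

lemma foldl_bracket_step_accepts: "foldl bracket_step 0 w \<in> {0, 2} \<longleftrightarrow> bracketed w"
proof (cases w)
  case (Cons c w')
  then show ?thesis
    using foldl_bracket_step_sink[of w'] foldl_bracket_step_last[of 1 w']
    by (cases w') (auto simp: bracketed_def bracket_step_def)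
qed (simp add: bracketed_def)

lemma bracketed_preimage_rational_image:
  assumes "finite B" and "f ` B \<subseteq> lists A"
  shows "\<exists>\<rho>. rational_transduction A B \<rho> \<and>
    {v \<in> lists B. bracketed v \<and> concat (map f v) \<in> L} = trans_image L \<rho>"
proof -
  have "\<forall>q\<in>{0, 1, 2, 3}. \<forall>b\<in>B. bracket_step q b \<in> {0, 1, 2, 3::nat}"
    by (simp add: bracket_step_def)
  from dfa_preimage_rational_image[OF assms _ _ _ this, of 0 "{0, 2}" L] show ?thesis
    unfolding foldl_bracket_step_accepts by simp
qed

lemma bracketed_ConsE:
  assumes "bracketed w" and "w \<noteq> []"
  obtains y u y' where "w = Inl y # u @ [Inr y']"
proof -
  obtain c w' where w: "w = c # w'"
    using assms(2) by (cases w) auto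
  with assms(1) have "w' \<noteq> []"
    by (auto simp: bracketed_def)
  then obtain u d where w': "w' = u @ [d]"
    by (cases w' rule: rev_cases) auto
  with w assms(1) have "isl c" and "\<not> isl d"
    by (auto simp: bracketed_def)
  then obtain y y' where "c = Inl y" and "d = Inr y'"
    by (cases c; cases d) auto
  with w w' show ?thesis
    using that[of y u y'] by simp
qed

section \<open>Paths in loop automata\<close>

lemma loop_path_in_carrier: "loop_path M mult X g a w b \<Longrightarrow> a \<in> M \<and> b \<in> M"
  by (induction rule: loop_path.induct) auto

lemma hat_Inl_iff [simp]: "Inl x \<in> hat X \<longleftrightarrow> x \<in> X"
  and hat_Inr_iff [simp]: "Inr x \<in> hat X \<longleftrightarrow> x \<in> X"
  by (auto simp: hat_def)

lemma finite_hat: "finite X \<Longrightarrow> finite (hat X)"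
  by (simp add: hat_def)

lemma loop_path_lists: "loop_path M mult X g a w b \<Longrightarrow> w \<in> lists (hat X)"
  by (induction rule: loop_path.induct) auto

lemma loop_path_Nil_iff [simp]: "loop_path M mult X g a [] b \<longleftrightarrow> a \<in> M \<and> b = a"
  and loop_path_Inl_iff [simp]: "loop_path M mult X g a (Inl x # w) b \<longleftrightarrow>
    a \<in> M \<and> x \<in> X \<and> loop_path M mult X g (mult a (g x)) w b"
  and loop_path_Inr_iff [simp]: "loop_path M mult X g a (Inr x # w) b \<longleftrightarrow>
    a \<in> M \<and> x \<in> X \<and> (\<exists>c\<in>M. mult c (g x) = a \<and> loop_path M mult X g c w b)"
  by (auto elim: loop_path.cases intro: loop_path.intros)

lemma loop_path_append_iff: "loop_path M mult X g a (u @ v) b \<longleftrightarrow>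
    (\<exists>m. loop_path M mult X g a u m \<and> loop_path M mult X g m v b)"
proof (induction u arbitrary: a)
  case Nil
  then show ?case using loop_path_in_carrier by fastforce
next
  case (Cons l u)
  then show ?case by (cases l) auto
qed

lemma loop_path_map_Inl_iff:
  assumes "\<forall>a\<in>M. \<forall>x\<in>X. mult a (g x) \<in> M" and "xs \<in> lists X" and "a \<in> M"
  shows "loop_path M mult X g a (map Inl xs) b \<longleftrightarrow> b = foldl mult a (map g xs)"
  using assms(2,3) by (induction xs arbitrary: a) (auto simp: assms(1))

lemma loop_path_map_Inr_rev_iff:
  assumes "\<forall>a\<in>M. \<forall>x\<in>X. mult a (g x) \<in> M" and "xs \<in> lists X"
  shows "loop_path M mult X g b (map Inr (rev xs)) c \<longleftrightarrow> c \<in> M \<and> b = foldl mult c (map g xs)"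
  using assms(2)
proof (induction xs arbitrary: c)
  case Nil
  then show ?case by auto
next
  case (Cons x xs)
  then show ?case using assms(1) by (auto simp: loop_path_append_iff)
qed

lemma loop_path_hom:
  assumes "\<pi> ` M \<subseteq> M'" and "\<forall>a\<in>M. \<forall>x\<in>X. \<pi> (mult a (g x)) = mult' (\<pi> a) (g' x)"
  shows "loop_path M mult X g a w b \<Longrightarrow> loop_path M' mult' X g' (\<pi> a) w (\<pi> b)"
proof (induction rule: loop_path.induct)
  case (nil a)
  then show ?case using assms(1) by auto
next
  case (fwd a x w b)
  then show ?case using assms by auto
next
  case (bwd a c x w b)
  then show ?case using assms by (auto intro!: bexI[of _ "\<pi> c"])
qed

fun hat_subst :: "('y \<Rightarrow> 'x list) \<Rightarrow> 'y + 'y \<Rightarrow> ('x + 'x) list" where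
  "hat_subst h (Inl y) = map Inl (h y)"
| "hat_subst h (Inr y) = map Inr (rev (h y))"

lemma hat_subst_lists:
  assumes "\<forall>y\<in>Y. h y \<in> lists X"
  shows "hat_subst h ` hat Y \<subseteq> lists (hat X)"
  using assms by (force simp: hat_def lists_eq_set)

lemma loop_path_hat_subst_iff:
  assumes clX: "\<forall>a\<in>M. \<forall>x\<in>X. mult a (gX x) \<in> M"
    and clY: "\<forall>a\<in>M. \<forall>y\<in>Y. mult a (gY y) \<in> M"
    and h: "\<forall>y\<in>Y. h y \<in> lists X \<and> (\<forall>a\<in>M. foldl mult a (map gX (h y)) = mult a (gY y))"
    and "w \<in> lists (hat Y)"
  shows "loop_path M mult X gX a (concat (map (hat_subst h) w)) b \<longleftrightarrow> loop_path M mult Y gY a w b"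
  using \<open>w \<in> lists (hat Y)\<close>
proof (induction w arbitrary: a)
  case Nil
  then show ?case by simp
next
  case (Cons l w)
  then obtain y where y: "y \<in> Y" "l = Inl y \<or> l = Inr y"
    by (auto simp: hat_def)
  have step: "loop_path M mult X gX a (hat_subst h l) m \<longleftrightarrow> loop_path M mult Y gY a [l] m" for a m
  proof (cases "a \<in> M")
    case True
    with y h clY show ?thesis
      by (auto simp: loop_path_map_Inl_iff[OF clX] loop_path_map_Inr_rev_iff[OF clX])
  next
    case False
    then show ?thesis
      using loop_path_in_carrier[of M mult X gX a "hat_subst h l" m]
        loop_path_in_carrier[of M mult Y gY a "[l]" m] by blast
  qed
  have "loop_path M mult X gX a (concat (map (hat_subst h) (l # w))) b \<longleftrightarrow>
      (\<exists>m. loop_path M mult X gX a (hat_subst h l) m \<and>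
        loop_path M mult X gX m (concat (map (hat_subst h) w)) b)"
    by (simp add: loop_path_append_iff)
  also have "\<dots> \<longleftrightarrow> (\<exists>m. loop_path M mult Y gY a [l] m \<and> loop_path M mult Y gY m w b)"
    using step Cons.IH Cons.hyps by simp
  also have "\<dots> \<longleftrightarrow> loop_path M mult Y gY a (l # w) b"
    using loop_path_append_iff[of M mult Y gY a "[l]" w b] by simp
  finally show ?case .
qed

definition conj_subst :: "('y \<Rightarrow> 'x list) \<Rightarrow> 'x list \<Rightarrow> 'y + 'y \<Rightarrow> ('x + 'x) list" where
  "conj_subst h p a = map Inl p @ hat_subst h a @ map Inr (rev p)"

lemma conj_subst_lists:
  assumes "\<forall>y\<in>Y. h y \<in> lists X" and "p \<in> lists X"
  shows "conj_subst h p ` hat Y \<subseteq> lists (hat X)"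
  using hat_subst_lists[OF assms(1)] assms(2)
  by (fastforce simp: conj_subst_def image_subset_iff lists_eq_set)

lemma loop_path_conj_iff:
  assumes cl: "\<forall>a\<in>M. \<forall>x\<in>X. mult a (g x) \<in> M" and "p \<in> lists X"
    and trivial: "\<forall>a\<in>M. foldl mult a (map g p) = a"
  shows "loop_path M mult X g a (map Inl p @ u @ map Inr (rev p)) b \<longleftrightarrow> loop_path M mult X g a u b"
proof -
  have pre: "loop_path M mult X g a (map Inl p) m \<longleftrightarrow> a \<in> M \<and> m = a" for a m
    using loop_path_map_Inl_iff[OF cl \<open>p \<in> lists X\<close>, of a m] trivial loop_path_in_carrier by fastforce
  have post: "loop_path M mult X g m (map Inr (rev p)) b \<longleftrightarrow> b \<in> M \<and> m = b" for m
    using loop_path_map_Inr_rev_iff[OF cl \<open>p \<in> lists X\<close>, of m b] trivial by auto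
  show ?thesis
    using loop_path_in_carrier[of M mult X g a u b] by (auto simp: loop_path_append_iff pre post)
qed

lemma loop_path_concat_conj_subst_iff:
  assumes "\<forall>a\<in>M. \<forall>x\<in>X. mult a (g x) \<in> M" and "p \<in> lists X"
    and "\<forall>a\<in>M. foldl mult a (map g p) = a"
  shows "loop_path M mult X g a (concat (map (conj_subst h p) w)) b \<longleftrightarrow>
    loop_path M mult X g a (concat (map (hat_subst h) w)) b"
proof (induction w arbitrary: a)
  case Nil
  then show ?case by simp
next
  case (Cons l w)
  have "concat (map (conj_subst h p) (l # w)) =
      (map Inl p @ hat_subst h l @ map Inr (rev p)) @ concat (map (conj_subst h p) w)"
    by (simp add: conj_subst_def)
  then have "loop_path M mult X g a (concat (map (conj_subst h p) (l # w))) b \<longleftrightarrow>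
      (\<exists>m. loop_path M mult X g a (map Inl p @ hat_subst h l @ map Inr (rev p)) m \<and>
        loop_path M mult X g m (concat (map (conj_subst h p) w)) b)"
    by (simp only: loop_path_append_iff)
  also have "\<dots> \<longleftrightarrow> (\<exists>m. loop_path M mult X g a (hat_subst h l) m \<and>
      loop_path M mult X g m (concat (map (hat_subst h) w)) b)"
    by (simp only: loop_path_conj_iff[OF assms] Cons.IH)
  also have "\<dots> \<longleftrightarrow> loop_path M mult X g a (concat (map (hat_subst h) (l # w))) b"
    by (simp add: loop_path_append_iff)
  finally show ?case .
qed

lemma concat_conj_subst_conj:
  "w \<noteq> [] \<Longrightarrow> \<exists>V. concat (map (conj_subst h p) w) = map Inl p @ V @ map Inr (rev p)"
proof (induction w)
  case Nil
  then show ?case by simp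
next
  case (Cons l w)
  show ?case
  proof (cases "w = []")
    case True
    then show ?thesis by (simp add: conj_subst_def)
  next
    case False
    with Cons.IH obtain V where "concat (map (conj_subst h p) w) = map Inl p @ V @ map Inr (rev p)"
      by blast
    then have "concat (map (conj_subst h p) (l # w)) =
      map Inl p @ (hat_subst h l @ map Inr (rev p) @ map Inl p @ V) @ map Inr (rev p)"
      by (simp add: conj_subst_def)
    then show ?thesis by blast
  qed
qed

section \<open>Evaluation of words and adjoining an identity\<close>

lemma semigroup_right_closed:
  "is_semigroup S mult \<Longrightarrow> g ` X \<subseteq> S \<Longrightarrow> \<forall>a\<in>S. \<forall>x\<in>X. mult a (g x) \<in> S"
  by (auto simp: is_semigroup_def)

lemma foldl_mult_assoc:
  assumes "is_semigroup S mult" and "g ` X \<subseteq> S" and "xs \<in> lists X" and "a \<in> S" and "b \<in> S"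
  shows "foldl mult (mult a b) (map g xs) = mult a (foldl mult b (map g xs))"
  using assms(3,5)
proof (induction xs arbitrary: b)
  case Nil
  then show ?case by simp
next
  case (Cons x xs)
  then have "mult (mult a b) (g x) = mult a (mult b (g x))" and "mult b (g x) \<in> S"
    using assms(1,2,4) by (auto simp: is_semigroup_def)
  with Cons show ?case by simp
qed

lemma foldl_eq_mult_mon_eval:
  assumes "is_monoid M mult e" and "g ` X \<subseteq> M" and "xs \<in> lists X" and "a \<in> M"
  shows "foldl mult a (map g xs) = mult a (mon_eval mult e g xs)"
  using assms foldl_mult_assoc[of M mult g X xs a e] by (simp add: is_monoid_def mon_eval_def)

lemma mon_eval_eq_sg_eval:
  assumes "is_monoid M mult e" and "g ` X \<subseteq> M" and "xs \<in> lists X" and "xs \<noteq> []"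
  shows "mon_eval mult e g xs = sg_eval mult g xs"
  using assms by (cases xs) (auto simp: is_monoid_def mon_eval_def sg_eval_def)

lemma foldl_eq_self_if_sg_eval_identity:
  assumes "is_monoid M mult e" and "g ` X \<subseteq> M"
    and "xs \<in> lists X" and "xs \<noteq> []" and "sg_eval mult g xs = e"
  shows "\<forall>a\<in>M. foldl mult a (map g xs) = a"
  using foldl_eq_mult_mon_eval[OF assms(1-3)] mon_eval_eq_sg_eval[OF assms(1-4)] assms(1,5)
  by (simp add: is_monoid_def)

lemma is_monoid_identity_unique: "is_monoid S mult e \<Longrightarrow> is_monoid S mult e' \<Longrightarrow> e = e'"
  unfolding is_monoid_def by metis

lemma mult_one_Some_neq_None [simp]: "mult_one mult a (Some s) \<noteq> None"
  by (cases a) auto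

lemma None_neq_mult_one_Some [simp]: "None \<noteq> mult_one mult a (Some s)"
  by (cases a) auto

lemma None_in_adjoin_one [simp]: "None \<in> adjoin_one S"
  and Some_in_adjoin_one_iff [simp]: "Some s \<in> adjoin_one S \<longleftrightarrow> s \<in> S"
  by (auto simp: adjoin_one_def)

lemma is_monoid_adjoin_one:
  assumes "is_semigroup S mult"
  shows "is_monoid (adjoin_one S) (mult_one mult) None"
proof -
  have "mult_one mult a b \<in> adjoin_one S"
    if "a \<in> adjoin_one S" "b \<in> adjoin_one S" for a b
    using that assms by (cases a; cases b) (auto simp: adjoin_one_def is_semigroup_def)
  moreover have "mult_one mult (mult_one mult a b) c = mult_one mult a (mult_one mult b c)"
    if "a \<in> adjoin_one S" "b \<in> adjoin_one S" "c \<in> adjoin_one S" for a b c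
    using that assms by (cases a; cases b; cases c) (auto simp: adjoin_one_def is_semigroup_def)
  moreover have "mult_one mult a None = a" for a
    by (cases a) auto
  ultimately show ?thesis
    by (auto simp: is_monoid_def is_semigroup_def)
qed

lemma mon_eval_adjoin_one:
  "xs \<noteq> [] \<Longrightarrow> mon_eval (mult_one mult) None (\<lambda>x. Some (g x)) xs = Some (sg_eval mult g xs)"
proof -
  have "foldl (mult_one mult) (Some s) (map (\<lambda>x. Some (g x)) xs) = Some (foldl mult s (map g xs))"
    for s xs
    by (induction xs arbitrary: s) auto
  then show "xs \<noteq> [] \<Longrightarrow> ?thesis"
    by (cases xs) (auto simp: mon_eval_def sg_eval_def)
qed

lemma loop_path_adjoin_one_Some:
  "loop_path S mult X g a w b \<Longrightarrow>
    loop_path (adjoin_one S) (mult_one mult) X (\<lambda>x. Some (g x)) (Some a) w (Some b)"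
  by (rule loop_path_hom) auto

lemma loop_problem_sg_subset_mon:
  assumes "is_monoid S mult e" and "g ` X \<subseteq> S"
  shows "loop_problem_sg S mult X g \<subseteq> loop_problem_mon S mult e X g"
proof -
  have "case_option e id ` adjoin_one S \<subseteq> S"
    and "\<forall>a\<in>adjoin_one S. \<forall>x\<in>X.
      case_option e id (mult_one mult a (Some (g x))) = mult (case_option e id a) (g x)"
    using assms by (auto simp: adjoin_one_def is_monoid_def)
  from loop_path_hom[OF this] show ?thesis
    by (fastforce simp: loop_problem_sg_def loop_problem_mon_def)
qed

lemma bracketed_if_loop_path_adjoin_one:
  assumes path: "loop_path (adjoin_one S) (mult_one mult) X (\<lambda>x. Some (g x)) None w None"
  shows "bracketed w"
proof (cases "w = []")
  case False
  then obtain c w' where "w = c # w'"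
    by (cases w) auto
  with path have "isl (hd w)"
    by (cases c) auto
  moreover from False obtain u d where w: "w = u @ [d]"
    by (cases w rule: rev_cases) auto
  with path obtain m where "loop_path (adjoin_one S) (mult_one mult) X (\<lambda>x. Some (g x)) m [d] None"
    by (auto simp: loop_path_append_iff)
  then have "\<not> isl (last w)"
    using w by (cases d) auto
  ultimately show ?thesis
    by (simp add: bracketed_def)
qed (simp add: bracketed_def)

lemma loop_problem_sg_eq_bracketed:
  assumes mon: "is_monoid S mult e" and g: "g ` X \<subseteq> S"
  shows "loop_problem_sg S mult X g = {w \<in> loop_problem_mon S mult e X g. bracketed w}"
proof (intro equalityI subsetI CollectI conjI)
  fix w
  assume "w \<in> loop_problem_sg S mult X g"
  then show "w \<in> loop_problem_mon S mult e X g" and "bracketed w"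
    using loop_problem_sg_subset_mon[OF assms] bracketed_if_loop_path_adjoin_one[of S mult X g w]
    by (auto simp: loop_problem_sg_def loop_problem_mon_def)
next
  fix w
  assume "w \<in> {w \<in> loop_problem_mon S mult e X g. bracketed w}"
  then have path: "loop_path S mult X g e w e" and "bracketed w"
    by (auto simp: loop_problem_mon_def)
  have "e \<in> S" and left_id: "\<forall>a\<in>S. mult e a = a"
    using mon by (auto simp: is_monoid_def)
  let ?M = "adjoin_one S" and ?mult = "mult_one mult" and ?g = "\<lambda>x. Some (g x)"
  show "w \<in> loop_problem_sg S mult X g"
  proof (cases "w = []")
    case False
    with \<open>bracketed w\<close> obtain y u y' where w: "w = Inl y # u @ [Inr y']"
      by (rule bracketed_ConsE)
    with path obtain m where "y \<in> X" "y' \<in> X" and u: "loop_path S mult X g (g y) u m"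
      and "loop_path S mult X g m [Inr y'] e"
      using g left_id by (auto simp: loop_path_append_iff)
    then have "m = g y'"
      using g left_id \<open>e \<in> S\<close> by auto
    with loop_path_adjoin_one_Some[OF u]
    have "loop_path ?M ?mult X ?g (Some (g y)) (u @ [Inr y']) None"
      using \<open>y' \<in> X\<close> g by (auto simp: loop_path_append_iff)
    then show ?thesis
      using w \<open>y \<in> X\<close> by (simp add: loop_problem_sg_def loop_problem_mon_def)
  qed (simp add: loop_problem_sg_def loop_problem_mon_def)
qed

text \<open>Read from the adjoined identity, \<open>p\<close> already leads to \<open>e\<close>, so a loop of the form
  \<open>p V p\<^sup>-\<^sup>1\<close> never needs the adjoined identity in between.\<close>
lemma loop_problem_sg_conj_iff:
  assumes mon: "is_monoid S mult e" and gX: "gX ` X \<subseteq> S"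
    and p: "p \<in> lists X" "p \<noteq> []" "sg_eval mult gX p = e"
  shows "map Inl p @ V @ map Inr (rev p) \<in> loop_problem_sg S mult X gX \<longleftrightarrow>
    map Inl p @ V @ map Inr (rev p) \<in> loop_problem_mon S mult e X gX"
proof
  show "map Inl p @ V @ map Inr (rev p) \<in> loop_problem_sg S mult X gX \<Longrightarrow>
      map Inl p @ V @ map Inr (rev p) \<in> loop_problem_mon S mult e X gX"
    using loop_problem_sg_subset_mon[OF mon gX] by blast
next
  have sg: "is_semigroup S mult"
    using mon by (simp add: is_monoid_def)
  note trivial = foldl_eq_self_if_sg_eval_identity[OF mon gX p]
  let ?M = "adjoin_one S" and ?mult = "mult_one mult" and ?g = "\<lambda>x. Some (gX x)"
  have cl: "\<forall>a\<in>?M. \<forall>x\<in>X. ?mult a (?g x) \<in> ?M"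
    using semigroup_right_closed[OF sg gX] gX by (auto simp: adjoin_one_def)
  have p_from_None: "foldl ?mult None (map ?g p) = Some e"
    using mon_eval_adjoin_one[OF p(2), of mult gX] p(3) by (simp add: mon_eval_def)
  assume "map Inl p @ V @ map Inr (rev p) \<in> loop_problem_mon S mult e X gX"
  then have "loop_path S mult X gX e V e"
    using loop_path_conj_iff[OF semigroup_right_closed[OF sg gX] p(1) trivial]
    by (simp add: loop_problem_mon_def)
  then have "loop_path ?M ?mult X ?g (Some e) V (Some e)"
    by (rule loop_path_adjoin_one_Some)
  moreover have "loop_path ?M ?mult X ?g None (map Inl p) (Some e)"
    using loop_path_map_Inl_iff[OF cl p(1)] p_from_None by simp
  moreover have "loop_path ?M ?mult X ?g (Some e) (map Inr (rev p)) None"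
    using loop_path_map_Inr_rev_iff[OF cl p(1)] p_from_None by simp
  ultimately have "loop_path ?M ?mult X ?g None (map Inl p @ V @ map Inr (rev p)) None"
    by (meson loop_path_append_iff)
  then show "map Inl p @ V @ map Inr (rev p) \<in> loop_problem_sg S mult X gX"
    by (simp add: loop_problem_sg_def loop_problem_mon_def)
qed

section \<open>Loop problems as inverse morphic images\<close>

lemma loop_problem_mon_preimage:
  assumes mon: "is_monoid M mult e" and gX: "gX ` X \<subseteq> M" and gY: "gY ` Y \<subseteq> M"
    and h: "\<forall>y\<in>Y. h y \<in> lists X \<and> mon_eval mult e gX (h y) = gY y"
  shows "loop_problem_mon M mult e Y gY =
    {w \<in> lists (hat Y). concat (map (hat_subst h) w) \<in> loop_problem_mon M mult e X gX}"
proof -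
  have sg: "is_semigroup M mult"
    using mon by (simp add: is_monoid_def)
  have "\<forall>y\<in>Y. h y \<in> lists X \<and> (\<forall>a\<in>M. foldl mult a (map gX (h y)) = mult a (gY y))"
    using h foldl_eq_mult_mon_eval[OF mon gX] by simp
  note subst_iff = loop_path_hat_subst_iff[OF semigroup_right_closed[OF sg gX]
      semigroup_right_closed[OF sg gY] this]
  have "loop_path M mult Y gY e w e \<longleftrightarrow>
      w \<in> lists (hat Y) \<and> loop_path M mult X gX e (concat (map (hat_subst h) w)) e" for w
    using subst_iff[of w e e] loop_path_lists[of M mult Y gY e w e] by blast
  then show ?thesis
    unfolding loop_problem_mon_def by blast
qed

lemma loop_problem_sg_preimage:
  assumes sg: "is_semigroup S mult" and "gX ` X \<subseteq> S" and "gY ` Y \<subseteq> S"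
    and "\<forall>y\<in>Y. h y \<in> lists X \<and> h y \<noteq> [] \<and> sg_eval mult gX (h y) = gY y"
  shows "loop_problem_sg S mult Y gY =
    {w \<in> lists (hat Y). concat (map (hat_subst h) w) \<in> loop_problem_sg S mult X gX}"
  unfolding loop_problem_sg_def
  by (rule loop_problem_mon_preimage[OF is_monoid_adjoin_one[OF sg]])
    (use assms in \<open>auto simp: mon_eval_adjoin_one\<close>)

lemma loop_problem_mon_preimage_sg:
  assumes mon: "is_monoid S mult e" and gX: "gX ` X \<subseteq> S" and gY: "gY ` Y \<subseteq> S"
    and h: "\<forall>y\<in>Y. h y \<in> lists X \<and> h y \<noteq> [] \<and> sg_eval mult gX (h y) = gY y"
    and p: "p \<in> lists X" "p \<noteq> []" "sg_eval mult gX p = e"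
  shows "loop_problem_mon S mult e Y gY =
    {w \<in> lists (hat Y). concat (map (conj_subst h p) w) \<in> loop_problem_sg S mult X gX}"
proof -
  have sg: "is_semigroup S mult"
    using mon by (simp add: is_monoid_def)
  note trivial = foldl_eq_self_if_sg_eval_identity[OF mon gX p]
  have "concat (map (conj_subst h p) w) \<in> loop_problem_sg S mult X gX \<longleftrightarrow>
      concat (map (hat_subst h) w) \<in> loop_problem_mon S mult e X gX" for w
  proof (cases "w = []")
    case True
    then show ?thesis
      using mon by (simp add: loop_problem_sg_def loop_problem_mon_def is_monoid_def)
  next
    case False
    then obtain V where "concat (map (conj_subst h p) w) = map Inl p @ V @ map Inr (rev p)"
      using concat_conj_subst_conj by blast
    then show ?thesis
      using loop_problem_sg_conj_iff[OF mon gX p, of V]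
        loop_path_concat_conj_subst_iff[OF semigroup_right_closed[OF sg gX] p(1) trivial, of e h w e]
      by (simp add: loop_problem_mon_def)
  qed
  moreover have "\<forall>y\<in>Y. h y \<in> lists X \<and> mon_eval mult e gX (h y) = gY y"
    using h mon_eval_eq_sg_eval[OF mon gX] by simp
  ultimately show ?thesis
    using loop_problem_mon_preimage[OF mon gX gY] by simp
qed

lemma loop_problem_sg_preimage_mon:
  assumes mon: "is_monoid S mult e" and gX: "gX ` X \<subseteq> S" and gY: "gY ` Y \<subseteq> S"
    and h: "\<forall>y\<in>Y. h y \<in> lists X \<and> mon_eval mult e gX (h y) = gY y"
  shows "loop_problem_sg S mult Y gY = {w \<in> lists (hat Y).
    bracketed w \<and> concat (map (hat_subst h) w) \<in> loop_problem_mon S mult e X gX}"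
  using loop_problem_sg_eq_bracketed[OF mon gY] loop_problem_mon_preimage[OF mon gX gY h] by auto

lemma semigroup_choice_spells:
  assumes "semigroup_choice S mult X gX" and "gY ` Y \<subseteq> S"
  obtains h where "\<forall>y\<in>Y. h y \<in> lists X \<and> h y \<noteq> [] \<and> sg_eval mult gX (h y) = gY y"
proof -
  have "\<forall>y\<in>Y. \<exists>xs. xs \<in> lists X \<and> xs \<noteq> [] \<and> sg_eval mult gX xs = gY y"
    using assms unfolding semigroup_choice_def by blast
  then show ?thesis
    using that by metis
qed

lemma monoid_choice_spells:
  assumes "monoid_choice S mult e X gX" and "gY ` Y \<subseteq> S"
  obtains h where "\<forall>y\<in>Y. h y \<in> lists X \<and> mon_eval mult e gX (h y) = gY y"
proof -
  have "\<forall>y\<in>Y. \<exists>xs. xs \<in> lists X \<and> mon_eval mult e gX xs = gY y"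
    using assms unfolding monoid_choice_def by blast
  then show ?thesis
    using that by metis
qed

lemma loop_problem_sg_rational_image:
  assumes "is_semigroup S mult" and L1: "is_loop_problem S mult X L1"
    and cY: "semigroup_choice S mult Y gY"
  shows "\<exists>\<rho>. rational_transduction (hat X) (hat Y) \<rho> \<and> loop_problem_sg S mult Y gY = trans_image L1 \<rho>"
proof -
  have gY: "gY ` Y \<subseteq> S" and fin: "finite (hat Y)"
    using cY by (auto simp: semigroup_choice_def finite_hat)
  from L1 consider
    (sg) gX where "semigroup_choice S mult X gX" "L1 = loop_problem_sg S mult X gX"
  | (mon) e gX where "is_monoid S mult e" "monoid_choice S mult e X gX" "L1 = loop_problem_mon S mult e X gX"
    unfolding is_loop_problem_def by blast
  then show ?thesis
  proof cases
    case sg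
    then have gX: "gX ` X \<subseteq> S"
      by (simp add: semigroup_choice_def)
    obtain h where h: "\<forall>y\<in>Y. h y \<in> lists X \<and> h y \<noteq> [] \<and> sg_eval mult gX (h y) = gY y"
      using semigroup_choice_spells[OF sg(1) gY] .
    then show ?thesis
      using preimage_rational_image[OF fin hat_subst_lists, of h X L1]
        loop_problem_sg_preimage[OF assms(1) gX gY h] sg(2) by auto
  next
    case mon
    then have gX: "gX ` X \<subseteq> S"
      by (simp add: monoid_choice_def)
    obtain h where h: "\<forall>y\<in>Y. h y \<in> lists X \<and> mon_eval mult e gX (h y) = gY y"
      using monoid_choice_spells[OF mon(2) gY] .
    then show ?thesis
      using bracketed_preimage_rational_image[OF fin hat_subst_lists, of h X L1]
        loop_problem_sg_preimage_mon[OF mon(1) gX gY h] mon(3) by auto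
  qed
qed

lemma loop_problem_mon_rational_image:
  assumes L1: "is_loop_problem S mult X L1"
    and mon: "is_monoid S mult e" and cY: "monoid_choice S mult e Y gY"
  shows "\<exists>\<rho>. rational_transduction (hat X) (hat Y) \<rho> \<and> loop_problem_mon S mult e Y gY = trans_image L1 \<rho>"
proof -
  have gY: "gY ` Y \<subseteq> S" and fin: "finite (hat Y)"
    using cY by (auto simp: monoid_choice_def finite_hat)
  from L1 consider
    (sg) gX where "semigroup_choice S mult X gX" "L1 = loop_problem_sg S mult X gX"
  | (mon) e' gX where "is_monoid S mult e'" "monoid_choice S mult e' X gX" "L1 = loop_problem_mon S mult e' X gX"
    unfolding is_loop_problem_def by blast
  then show ?thesis
  proof cases
    case sg
    then have gX: "gX ` X \<subseteq> S"
      by (simp add: semigroup_choice_def)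
    obtain h where h: "\<forall>y\<in>Y. h y \<in> lists X \<and> h y \<noteq> [] \<and> sg_eval mult gX (h y) = gY y"
      using semigroup_choice_spells[OF sg(1) gY] .
    obtain p where p: "p \<in> lists X" "p \<noteq> []" "sg_eval mult gX p = e"
      using sg(1) mon unfolding semigroup_choice_def is_monoid_def by blast
    show ?thesis
      using preimage_rational_image[OF fin conj_subst_lists, of h X p L1] h p(1)
        loop_problem_mon_preimage_sg[OF mon gX gY h p] sg(2) by auto
  next
    case mon': mon
    then have gX: "gX ` X \<subseteq> S" and "e' = e"
      using is_monoid_identity_unique[OF mon] by (auto simp: monoid_choice_def)
    obtain h where h: "\<forall>y\<in>Y. h y \<in> lists X \<and> mon_eval mult e gX (h y) = gY y"
      using monoid_choice_spells[OF mon'(2) gY] \<open>e' = e\<close> by blast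
    then show ?thesis
      using preimage_rational_image[OF fin hat_subst_lists, of h X L1]
        loop_problem_mon_preimage[OF mon gX gY h] mon'(3) \<open>e' = e\<close> by auto
  qed
qed

lemma loop_problem_rational_image:
  assumes "is_semigroup S mult" and "is_loop_problem S mult X L1" and "is_loop_problem S mult Y L2"
  shows "\<exists>\<rho>. rational_transduction (hat X) (hat Y) \<rho> \<and> L2 = trans_image L1 \<rho>"
  using assms(3) loop_problem_sg_rational_image[OF assms(1,2)] loop_problem_mon_rational_image[OF assms(2)]
  unfolding is_loop_problem_def by blast

theorem corollary4p8:
  fixes S :: "'s set" and mult :: "'s \<Rightarrow> 's \<Rightarrow> 's"
    and X :: "'x set" and Y :: "'y set"
    and L1 :: "('x + 'x) list set" and L2 :: "('y + 'y) list set"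
  assumes "is_semigroup S mult"
    and "is_loop_problem S mult X L1"
    and "is_loop_problem S mult Y L2"
  shows "rationally_equivalent (hat X) (hat Y) L1 L2"
  unfolding rationally_equivalent_def
  using loop_problem_rational_image[OF assms(1,2,3)] loop_problem_rational_image[OF assms(1,3,2)]
  by blast

end
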